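(* For every graph $G$ on $n\ge 2$ vertices, $\rho_T(G)\le n-1$.
   Context: Graphs are finite and simple. For $u,v\in(\mathbb{R}\cup\{\infty\})^k$ the min-plus tropical dot product is $u\odot v=\min\{u_1+v_1,\dots,u_k+v_k\}$ (with $a+\infty=\infty$). A min-plus $k$-tropical dot product representation of a graph $G=(V,E)$ is a map $f:V\to(\mathbb{R}\cup\{\infty\})^k$ together with a threshold $t>0$ such that for all distinct $x,y\in V$: $xy\in E$ if and only if $f(x)\odot f(y)\ge t$. $\rho_T(G)$ denotes the least $k\ge 1$ for which $G$ has a min-plus $k$-tropical dot product representation. *)

theory Defs
  imports Complex_Main "HOL-Library.Extended_Real"
begin

definition simple_graph :: "'a set \<Rightarrow> ('a \<Rightarrow> 'a \<Rightarrow> bool) \<Rightarrow> bool" where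
  "simple_graph V E \<longleftrightarrow> finite V \<and> (\<forall>x y. E x y \<longrightarrow> E y x) \<and> (\<forall>x. \<not> E x x)"

text \<open>Vectors in (R \<union> {\<infinity>})^k are functions nat \<Rightarrow> ereal whose components with
  index i < k are not -\<infinity>. Min-plus tropical dot product.\<close>
definition trop_dot :: "nat \<Rightarrow> (nat \<Rightarrow> ereal) \<Rightarrow> (nat \<Rightarrow> ereal) \<Rightarrow> ereal" where
  "trop_dot k u v = Min ((\<lambda>i. u i + v i) ` {..<k})"

definition trop_rep :: "'a set \<Rightarrow> ('a \<Rightarrow> 'a \<Rightarrow> bool) \<Rightarrow> nat \<Rightarrow> ('a \<Rightarrow> nat \<Rightarrow> ereal) \<Rightarrow> real \<Rightarrow> bool" where
  "trop_rep V E k f t \<longleftrightarrow> t > 0 \<and>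
     (\<forall>x\<in>V. \<forall>i<k. f x i \<noteq> -\<infinity>) \<and>
     (\<forall>x\<in>V. \<forall>y\<in>V. x \<noteq> y \<longrightarrow> (E x y \<longleftrightarrow> trop_dot k (f x) (f y) \<ge> ereal t))"

definition has_trop_rep :: "'a set \<Rightarrow> ('a \<Rightarrow> 'a \<Rightarrow> bool) \<Rightarrow> nat \<Rightarrow> bool" where
  "has_trop_rep V E k \<longleftrightarrow> (\<exists>f t. trop_rep V E k f t)"

definition rho_T :: "'a set \<Rightarrow> ('a \<Rightarrow> 'a \<Rightarrow> bool) \<Rightarrow> nat" where
  "rho_T V E = (LEAST k. k \<ge> 1 \<and> has_trop_rep V E k)"

end

theory Submission
  imports Defs
begin

text \<open>Index the coordinates by all vertices but one, say \<open>g 0, \<dots>, g (n-2)\<close>. Vertex \<open>x\<close> gets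
  \<open>-2\<close> in its own coordinate, \<open>3\<close> in the coordinates of its neighbours and \<open>2\<close> elsewhere.
  For distinct \<open>x, y\<close> a coordinate belonging to neither contributes at least \<open>4\<close>, while a
  coordinate belonging to one of them contributes \<open>1\<close> or \<open>0\<close> according as \<open>xy\<close> is an edge;
  since at most one vertex lacks a coordinate, such a coordinate exists, so threshold \<open>1\<close>
  detects exactly the edges.\<close>

lemma trop_dot_ge_iff:
  assumes "0 < k"
  shows "c \<le> trop_dot k u v \<longleftrightarrow> (\<forall>i<k. c \<le> u i + v i)"
  unfolding trop_dot_def using assms by (subst Min_ge_iff) auto

definition cover_embedding :: "('a \<Rightarrow> 'a \<Rightarrow> bool) \<Rightarrow> (nat \<Rightarrow> 'a) \<Rightarrow> 'a \<Rightarrow> nat \<Rightarrow> ereal" where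
  "cover_embedding E g x i = (if x = g i then -2 else if E x (g i) then 3 else 2)"

lemma cover_embedding_own_coordinate:
  assumes "g i = x" and "x \<noteq> y" and "\<And>x y. E x y \<Longrightarrow> E y x"
  shows "cover_embedding E g x i + cover_embedding E g y i = (if E x y then 1 else 0)"
  using assms unfolding cover_embedding_def by auto

lemma cover_embedding_other_coordinate:
  assumes "g i \<noteq> x" and "g i \<noteq> y"
  shows "4 \<le> cover_embedding E g x i + cover_embedding E g y i"
  using assms unfolding cover_embedding_def by auto

lemma trop_rep_cover_embedding:
  assumes sym: "\<And>x y. E x y \<Longrightarrow> E y x"
    and cover: "\<And>x y. x \<in> V \<Longrightarrow> y \<in> V \<Longrightarrow> x \<noteq> y \<Longrightarrow> x \<in> g ` {..<k} \<or> y \<in> g ` {..<k}"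
  shows "trop_rep V E k (cover_embedding E g) 1"
proof -
  let ?f = "cover_embedding E g"
  have "E x y \<longleftrightarrow> ereal 1 \<le> trop_dot k (?f x) (?f y)"
    if xy: "x \<in> V" "y \<in> V" "x \<noteq> y" for x y
  proof -
    obtain j where j: "j < k" "g j = x \<or> g j = y"
      using cover[OF xy] by blast
    have dot: "ereal 1 \<le> trop_dot k (?f x) (?f y) \<longleftrightarrow> (\<forall>i<k. 1 \<le> ?f x i + ?f y i)"
      using j(1) by (simp add: trop_dot_ge_iff one_ereal_def)
    have coord: "1 \<le> ?f x i + ?f y i \<longleftrightarrow> E x y \<or> (g i \<noteq> x \<and> g i \<noteq> y)" for i
    proof (cases "g i = x \<or> g i = y")
      case True
      then have "?f x i + ?f y i = (if E x y then 1 else 0)"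
        using cover_embedding_own_coordinate[of g i x y E] cover_embedding_own_coordinate[of g i y x E]
          sym \<open>x \<noteq> y\<close> by (auto simp: add.commute)
      with True show ?thesis by auto
    next
      case False
      then show ?thesis
        using cover_embedding_other_coordinate[of g i x y E] order.trans[of "1::ereal" 4] by auto
    qed
    show ?thesis
      unfolding dot coord using j by blast
  qed
  then show ?thesis
    unfolding trop_rep_def by (auto simp: cover_embedding_def)
qed

lemma has_trop_rep_card_minus_one:
  assumes "simple_graph V E" and "card V = n" and "n \<ge> 2"
  shows "has_trop_rep V E (n - 1)"
proof -
  have "finite V" and sym: "\<And>x y. E x y \<Longrightarrow> E y x"
    using assms(1) unfolding simple_graph_def by auto
  then obtain g where g: "bij_betw g {..<n} V"
    using ex_bij_betw_nat_finite[of V] assms(2) by (auto simp: atLeast0LessThan)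
  have "{..<n} = insert (n - 1) {..<n - 1}"
    using assms(3) by auto
  then have "V = insert (g (n - 1)) (g ` {..<n - 1})"
    using bij_betw_imp_surj_on[OF g] by auto
  then have "x \<in> g ` {..<n - 1} \<or> y \<in> g ` {..<n - 1}" if "x \<in> V" "y \<in> V" "x \<noteq> y" for x y
    using that by blast
  with sym show ?thesis
    unfolding has_trop_rep_def using trop_rep_cover_embedding by blast
qed

theorem mainTheorem3:
  fixes V :: "'a set" and E :: "'a \<Rightarrow> 'a \<Rightarrow> bool" and n :: nat
  assumes "simple_graph V E" and "card V = n" and "n \<ge> 2"
  shows "(\<exists>k. 1 \<le> k \<and> k \<le> n - 1 \<and> has_trop_rep V E k) \<and> rho_T V E \<le> n - 1"
proof -
  have rep: "has_trop_rep V E (n - 1)"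
    using has_trop_rep_card_minus_one assms by blast
  have "1 \<le> n - 1"
    using assms(3) by simp
  with rep show ?thesis
    unfolding rho_T_def by (auto intro: Least_le)
qed

end
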